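(* Let $p>2$ be a prime. Define the sequence $(x_1,\ldots,x_p)$ of elements of $\mathbb{F}_p$ by $x_1=0$, and $x_{2j}=j$, $x_{2j+1}=p-j$ for $1\le j\le (p-1)/2$ (so the sequence is $(0,1,p-1,2,p-2,\ldots)$). Then this sequence is a sequencing of the sharply $2$-transitive action of the affine group $\mathrm{Aff}(\mathbb{F}_p)=\{x\mapsto ax+b : a\in\mathbb{F}_p^*,\ b\in\mathbb{F}_p\}$ on $\mathbb{F}_p$. In particular, a $(p,3)$-permutation design exists for every odd prime $p$.
   Context: For a group $G$ acting sharply $k$-transitively on an $n$-element set $X$ (for any two ordered $k$-tuples of distinct elements there is exactly one $g\in G$ mapping the first to the second coordinatewise), a sequencing of $X$ is an enumeration $(x_1,\ldots,x_n)$ of all elements of $X$ such that the $n-k$ tuples $(x_1,\ldots,x_{k+1}),\ldots,(x_{n-k},\ldots,x_n)$ lie in pairwise distinct orbits of $G$ acting coordinatewise on ordered $(k+1)$-tuples of distinct elements of $X$. An $(n,t)$-permutation design is a set of $n(n-1)\cdots(n-t+2)$ permutations of an $n$-set (each written as a sequence of all $n$ elements) such that every ordered $t$-tuple of distinct elements occurs exactly once as a contiguous subsequence of one of the permutations. *)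

theory Defs
  imports "HOL-Computational_Algebra.Primes"
begin

text \<open>The prime field F_p is modelled by the residues {0..<p} (nat) with arithmetic mod p.\<close>

definition aff_group :: "nat \<Rightarrow> (nat \<Rightarrow> nat) set" where
  "aff_group p = {(\<lambda>x. (a * x + b) mod p) | a b. a \<in> {1..<p} \<and> b < p}"

definition same_orbit :: "('a \<Rightarrow> 'a) set \<Rightarrow> 'a list \<Rightarrow> 'a list \<Rightarrow> bool" where
  "same_orbit G u v \<longleftrightarrow> (\<exists>g\<in>G. map g u = v)"

definition sequencing :: "('a \<Rightarrow> 'a) set \<Rightarrow> 'a set \<Rightarrow> nat \<Rightarrow> 'a list \<Rightarrow> bool" where
  "sequencing G X k xs \<longleftrightarrow>
     distinct xs \<and> set xs = X \<and>
     (\<forall>i < length xs - k. \<forall>j < length xs - k. i \<noteq> j \<longrightarrow>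
        \<not> same_orbit G (take (k+1) (drop i xs)) (take (k+1) (drop j xs)))"

definition zigzag_seq :: "nat \<Rightarrow> nat list" where
  "zigzag_seq p = 0 # concat (map (\<lambda>j. [j, p - j]) [1..<(p - 1) div 2 + 1])"

definition perm_design :: "nat \<Rightarrow> nat \<Rightarrow> 'a set \<Rightarrow> 'a list set \<Rightarrow> bool" where
  "perm_design n t X P \<longleftrightarrow>
     finite X \<and> card X = n \<and> finite P \<and> card P = (\<Prod>i<t - 1. n - i) \<and>
     (\<forall>\<pi>\<in>P. distinct \<pi> \<and> set \<pi> = X) \<and>
     (\<forall>u. distinct u \<and> length u = t \<and> set u \<subseteq> X \<longrightarrow>
        card {(\<pi>, i). \<pi> \<in> P \<and> i + t \<le> length \<pi> \<and> take t (drop i \<pi>) = u} = 1)"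

end

theory Submission
  imports Defs "HOL-Number_Theory.Cong"
begin

(* Think of the residues as elements of F_p. The window of the zigzag sequence starting at
   position i (counting from 0) is (0, 1, -1) for i = 0, (j, -j, j + 1) for i = 2j - 1 and
   (-j, j + 1, -(j + 1)) for i = 2j; in each case y - x = (i + 1)(x - z). The ratio
   (y - x)/(x - z) of a triple (x, y, z) is invariant under affine maps, so the p - 2 windows,
   with ratios 1, ..., p - 2, lie in distinct orbits. Conversely, a triple of distinct elements
   has a ratio r in {1, ..., p - 2}, and the affine map sending the ends of the window with ratio r
   to the ends of the triple sends the whole window onto the triple. Window and map are unique by
   sharp 2-transitivity, so the p(p - 1) affine images of the sequence form a (p,3)-permutation
   design. *)

lemma residue_eq_if_cong:
  assumes "[int x = int y] (mod int p)" "x < p" "y < p"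
  shows "x = y"
  using assms by (simp add: cong_int_iff cong_less_imp_eq_nat)

lemma coprime_diff_residues:
  assumes "prime p" "x < p" "y < p" "x \<noteq> y"
  shows "coprime (int x - int y) (int p)"
proof -
  have "\<not> int p dvd (int x - int y)"
  proof
    assume "int p dvd (int x - int y)"
    then have "[int x = int y] (mod int p)" by (simp add: cong_iff_dvd_diff)
    with assms show False using residue_eq_if_cong by blast
  qed
  then show ?thesis
    using assms(1) by (simp add: prime_imp_coprime prime_nat_int_transfer coprime_commute)
qed

definition has_ratio :: "nat \<Rightarrow> int \<Rightarrow> nat \<Rightarrow> nat \<Rightarrow> nat \<Rightarrow> bool" where
  "has_ratio p r x y z \<longleftrightarrow> [int y - int x = r * (int x - int z)] (mod int p)"

lemma has_ratio_unique:
  assumes "prime p" "x < p" "z < p" "x \<noteq> z" "has_ratio p r x y z" "has_ratio p s x y z"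
  shows "[r = s] (mod int p)"
proof -
  have "[r * (int x - int z) = s * (int x - int z)] (mod int p)"
    using assms(5,6) unfolding has_ratio_def by (metis cong_sym cong_trans)
  then show ?thesis
    using coprime_diff_residues[OF assms(1-4)] by (simp add: cong_mult_rcancel)
qed

lemma has_ratio_index_eq:
  assumes "prime p" "x < p" "z < p" "x \<noteq> z" "i < p" "j < p"
    and "has_ratio p (int i + 1) x y z" "has_ratio p (int j + 1) x y z"
  shows "i = j"
proof -
  have "[int i + 1 = int j + 1] (mod int p)"
    using has_ratio_unique[OF assms(1-4,7,8)] .
  then have "[int i = int j] (mod int p)"
    by (simp add: cong_add_rcancel)
  then show ?thesis
    using assms(5,6) by (rule residue_eq_if_cong)
qed

lemma has_ratio_middle_unique:
  assumes "has_ratio p r x y z" "has_ratio p r x y' z" "y < p" "y' < p"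
  shows "y = y'"
proof -
  have "[int y - int x = int y' - int x] (mod int p)"
    using assms(1,2) unfolding has_ratio_def by (metis cong_sym cong_trans)
  then have "[int y = int y'] (mod int p)"
    using cong_add[OF _ cong_refl, of "int y - int x" "int y' - int x" _ "int x"] by simp
  then show ?thesis using assms(3,4) by (rule residue_eq_if_cong)
qed

lemma has_ratio_exists:
  assumes "prime p" "x < p" "y < p" "z < p" "x \<noteq> y" "y \<noteq> z" "x \<noteq> z"
  shows "\<exists>i. i + 2 < p \<and> has_ratio p (int i + 1) x y z"
proof -
  obtain w where w: "[(int x - int z) * w = 1] (mod int p)"
    using cong_solve_coprime_int coprime_diff_residues[OF assms(1,2,4,7)] by blast
  define r where "r = ((int y - int x) * w) mod int p"
  have r_range: "0 \<le> r" "r < int p"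
    using assms(2) unfolding r_def by simp_all
  have "[r * (int x - int z) = ((int y - int x) * w) * (int x - int z)] (mod int p)"
    unfolding r_def by (rule cong_scalar_right) simp
  also have "((int y - int x) * w) * (int x - int z) = (int y - int x) * ((int x - int z) * w)"
    by (simp add: algebra_simps)
  also have "[\<dots> = (int y - int x) * 1] (mod int p)"
    using w by (rule cong_scalar_left)
  finally have ratio: "[int y - int x = r * (int x - int z)] (mod int p)"
    by (simp add: cong_sym)
  have "r \<noteq> 0"
  proof
    assume "r = 0"
    then have "[int y = int x] (mod int p)"
      using ratio by (simp add: cong_iff_dvd_diff)
    then show False using assms residue_eq_if_cong by blast
  qed
  moreover have "r \<noteq> int p - 1"
  proof
    assume "r = int p - 1"
    then have "[int y - int x = (int p - 1) * (int x - int z)] (mod int p)"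
      using ratio by simp
    moreover have "[(int p - 1) * (int x - int z) = int z - int x] (mod int p)"
      by (simp add: cong_iff_dvd_diff algebra_simps)
    ultimately have "[int y - int x = int z - int x] (mod int p)"
      by (rule cong_trans)
    then have "[int y = int z] (mod int p)"
      by (simp add: cong_iff_dvd_diff)
    then show False using assms residue_eq_if_cong by blast
  qed
  ultimately have "nat r - 1 + 2 < p" and r_eq: "int (nat r - 1) + 1 = r"
    using r_range by linarith+
  then show ?thesis
    using ratio unfolding has_ratio_def by (intro exI[of _ "nat r - 1"]) (simp only: r_eq)
qed

lemma aff_group_less: "0 < p \<Longrightarrow> g \<in> aff_group p \<Longrightarrow> g x < p"
  unfolding aff_group_def by auto

lemma inj_on_aff_group:
  assumes "prime p" "g \<in> aff_group p"
  shows "inj_on g {0..<p}"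
proof
  fix x y assume xy: "x \<in> {0..<p}" "y \<in> {0..<p}" and "g x = g y"
  obtain a b where a: "a \<in> {1..<p}" and g: "g = (\<lambda>x. (a * x + b) mod p)"
    using assms(2) unfolding aff_group_def by blast
  have "[a * x + b = a * y + b] (mod p)"
    using \<open>g x = g y\<close> unfolding g cong_def .
  then have "[a * x = a * y] (mod p)"
    by (simp add: cong_add_rcancel_nat)
  moreover have "coprime a p"
    using assms(1) a prime_imp_coprime_nat[of p a] nat_dvd_not_less[of a p]
    by (simp add: coprime_commute)
  ultimately have "[x = y] (mod p)"
    by (simp add: cong_mult_lcancel_nat)
  then show "x = y"
    using xy by (simp add: cong_less_imp_eq_nat)
qed

lemma image_aff_group:
  assumes "prime p" "g \<in> aff_group p"
  shows "g ` {0..<p} = {0..<p}"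
proof (rule endo_inj_surj)
  show "g ` {0..<p} \<subseteq> {0..<p}"
    using aff_group_less[OF prime_gt_0_nat[OF assms(1)] assms(2)] by auto
qed (use inj_on_aff_group[OF assms] in auto)

lemma aff_group_eqI:
  assumes "prime p" "g \<in> aff_group p" "h \<in> aff_group p"
    and "x < p" "y < p" "x \<noteq> y" "g x = h x" "g y = h y"
  shows "g = h"
proof -
  obtain a b where g: "g = (\<lambda>x. (a * x + b) mod p)"
    using assms(2) unfolding aff_group_def by blast
  obtain c d where h: "h = (\<lambda>x. (c * x + d) mod p)"
    using assms(3) unfolding aff_group_def by blast
  have eq_iff: "g v = h v \<longleftrightarrow> [int a * int v + int b = int c * int v + int d] (mod int p)" for v
  proof -
    have "g v = h v \<longleftrightarrow> [a * v + b = c * v + d] (mod p)"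
      unfolding g h cong_def by simp
    also have "\<dots> \<longleftrightarrow> [int (a * v + b) = int (c * v + d)] (mod int p)"
      by (simp only: cong_int_iff)
    finally show ?thesis
      by simp
  qed
  have "[int a * (int x - int y) = int c * (int x - int y)] (mod int p)"
    using cong_diff[OF assms(7)[unfolded eq_iff] assms(8)[unfolded eq_iff]]
    by (simp add: algebra_simps)
  then have ac: "[int a = int c] (mod int p)"
    using coprime_diff_residues[OF assms(1,4-6)] by (simp add: cong_mult_rcancel)
  then have "[int c * int x + int d = int a * int x + int d] (mod int p)"
    by (intro cong_add cong_scalar_right) (simp_all add: cong_sym)
  with assms(7)[unfolded eq_iff] have "[int a * int x + int b = int a * int x + int d] (mod int p)"
    by (rule cong_trans)
  then have "[int b = int d] (mod int p)"
    by (simp add: cong_add_lcancel)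
  with ac have "g v = h v" for v
    unfolding eq_iff by (intro cong_add cong_scalar_right)
  then show ?thesis ..
qed

lemma inj_on_map_aff_group:
  assumes "prime p" "set xs = {0..<p}"
  shows "inj_on (\<lambda>g. map g xs) (aff_group p)"
proof (rule inj_onI)
  fix g h
  assume "g \<in> aff_group p" "h \<in> aff_group p" "map g xs = map h xs"
  moreover have "0 \<in> set xs" "1 \<in> set xs"
    using assms prime_gt_1_nat by auto
  ultimately show "g = h"
    using aff_group_eqI[OF assms(1), of g h 0 1] prime_gt_1_nat[OF assms(1)] by (simp add: map_eq_conv)
qed

lemma aff_group_maps_pair:
  assumes "prime p" "x < p" "y < p" "x \<noteq> y" "u < p" "v < p" "u \<noteq> v"
  shows "\<exists>g \<in> aff_group p. g x = u \<and> g y = v"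
proof -
  obtain w where w: "[(int x - int y) * w = 1] (mod int p)"
    using cong_solve_coprime_int coprime_diff_residues[OF assms(1-4)] by blast
  define A where "A = ((int u - int v) * w) mod int p"
  define B where "B = (int u - A * int x) mod int p"
  have ranges: "0 \<le> A" "A < int p" "0 \<le> B" "B < int p"
    using assms(2) unfolding A_def B_def by simp_all
  have "[A * (int x - int y) = ((int u - int v) * w) * (int x - int y)] (mod int p)"
    unfolding A_def by (rule cong_scalar_right) simp
  also have "((int u - int v) * w) * (int x - int y) = (int u - int v) * ((int x - int y) * w)"
    by (simp add: algebra_simps)
  also have "[\<dots> = (int u - int v) * 1] (mod int p)"
    using w by (rule cong_scalar_left)
  finally have slope: "[A * (int x - int y) = int u - int v] (mod int p)"
    by simp
  have "A \<noteq> 0"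
  proof
    assume "A = 0"
    then have "[int u = int v] (mod int p)"
      using slope by (simp add: cong_iff_dvd_diff dvd_diff_commute)
    then show False
      using assms(5-7) residue_eq_if_cong by blast
  qed
  define g where "g = (\<lambda>z. (nat A * z + nat B) mod p)"
  have "g \<in> aff_group p"
    unfolding aff_group_def g_def using ranges \<open>A \<noteq> 0\<close>
    by (intro CollectI exI[of _ "nat A"] exI[of _ "nat B"]) auto
  have g_cong: "[int (g z) = A * int z + B] (mod int p)" for z
    unfolding g_def cong_def using ranges by (simp add: zmod_int)
  have B_cong: "[A * int z + B = A * int z + (int u - A * int x)] (mod int p)" for z
    unfolding B_def by (rule cong_add) simp_all
  have "[int (g x) = int u] (mod int p)"
    using cong_trans[OF g_cong[of x] B_cong[of x]] by simp
  moreover have "[int (g y) = int v] (mod int p)"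
  proof -
    have "[int (g y) = A * int y + (int u - A * int x)] (mod int p)"
      using g_cong B_cong by (rule cong_trans)
    also have "A * int y + (int u - A * int x) = int u - A * (int x - int y)"
      by (simp add: algebra_simps)
    also have "[\<dots> = int u - (int u - int v)] (mod int p)"
      using slope by (intro cong_diff cong_refl)
    finally show ?thesis
      by simp
  qed
  moreover have "g z < p" for z
    using assms(2) unfolding g_def by simp
  ultimately have "g x = u" "g y = v"
    using assms(5,6) residue_eq_if_cong by blast+
  with \<open>g \<in> aff_group p\<close> show ?thesis
    by blast
qed

lemma card_aff_group:
  assumes "1 < p"
  shows "card (aff_group p) = p * (p - 1)"
proof -
  let ?f = "\<lambda>(a, b). (\<lambda>x. (a * x + b) mod p)"
  have group_eq: "aff_group p = ?f ` ({1..<p} \<times> {..<p})"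
    unfolding aff_group_def image_def by force
  have "inj_on ?f ({1..<p} \<times> {..<p})"
  proof (rule inj_onI, clarify)
    fix a b c d
    assume ranges: "a \<in> {1..<p}" "b < p" "c \<in> {1..<p}" "d < p"
      and eq: "(\<lambda>x. (a * x + b) mod p) = (\<lambda>x. (c * x + d) mod p)"
    have "b = d"
      using fun_cong[OF eq, of 0] ranges by simp
    then have "[a + b = c + b] (mod p)"
      using fun_cong[OF eq, of 1] unfolding cong_def by simp
    then have "a = c"
      using ranges cong_less_imp_eq_nat[of a p c] by (simp add: cong_add_rcancel_nat)
    with \<open>b = d\<close> show "a = c \<and> b = d"
      by simp
  qed
  then show ?thesis
    unfolding group_eq by (simp add: card_image card_cartesian_product)
qed

lemma has_ratio_aff_group:
  assumes "g \<in> aff_group p" "has_ratio p r x y z"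
  shows "has_ratio p r (g x) (g y) (g z)"
proof -
  obtain a b where g: "g = (\<lambda>x. (a * x + b) mod p)"
    using assms(1) unfolding aff_group_def by blast
  have g_cong: "[int (g v) = int a * int v + int b] (mod int p)" for v
    unfolding g by (simp add: cong_def zmod_int)
  have "[int (g y) - int (g x) = int a * (int y - int x)] (mod int p)"
    using cong_diff[OF g_cong[of y] g_cong[of x]] by (simp add: algebra_simps)
  also have "[int a * (int y - int x) = int a * (r * (int x - int z))] (mod int p)"
    using assms(2) unfolding has_ratio_def by (rule cong_scalar_left)
  also have "int a * (r * (int x - int z)) = r * (int a * int x + int b - (int a * int z + int b))"
    by (simp add: algebra_simps)
  also have "[\<dots> = r * (int (g x) - int (g z))] (mod int p)"
    using cong_diff[OF g_cong[of x] g_cong[of z]] by (intro cong_scalar_left) (simp add: cong_sym)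
  finally show ?thesis
    unfolding has_ratio_def .
qed

lemma perm_design_image_of_list:
  fixes G :: "('a \<Rightarrow> 'a) set" and xs :: "'a list"
  assumes "finite X" "card X = n" "finite G" "card G = (\<Prod>i<t - 1. n - i)"
    and inj: "inj_on (\<lambda>g. map g xs) G"
    and perm: "\<And>g. g \<in> G \<Longrightarrow> distinct (map g xs) \<and> set (map g xs) = X"
    and unique: "\<And>u. distinct u \<Longrightarrow> length u = t \<Longrightarrow> set u \<subseteq> X \<Longrightarrow>
      \<exists>!(g, i). g \<in> G \<and> i + t \<le> length xs \<and> map g (take t (drop i xs)) = u"
  shows "perm_design n t X ((\<lambda>g. map g xs) ` G)"
proof -
  have "card {(\<pi>, i). \<pi> \<in> (\<lambda>g. map g xs) ` G \<and> i + t \<le> length \<pi> \<and> take t (drop i \<pi>) = u} = 1"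
    if u: "distinct u" "length u = t" "set u \<subseteq> X" for u
  proof -
    let ?T = "{(g, i). g \<in> G \<and> i + t \<le> length xs \<and> map g (take t (drop i xs)) = u}"
    have occurrences: "{(\<pi>, i). \<pi> \<in> (\<lambda>g. map g xs) ` G \<and> i + t \<le> length \<pi> \<and> take t (drop i \<pi>) = u}
        = (\<lambda>(g, i). (map g xs, i)) ` ?T"
      by (force simp: take_map drop_map)
    have "inj_on (\<lambda>(g, i). (map g xs, i)) ?T"
      using inj by (auto simp: inj_on_def)
    moreover obtain gi where "?T = {gi}"
      using unique[OF u] by (auto simp: Ex1_def)
    ultimately show ?thesis
      unfolding occurrences by (simp add: card_image)
  qed
  then show ?thesis
    unfolding perm_design_def using assms by (simp add: card_image)
qed

definition zigzag :: "nat \<Rightarrow> nat \<Rightarrow> nat" where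
  "zigzag p i = (if i = 0 then 0 else if odd i then (i + 1) div 2 else p - i div 2)"

lemma zigzag_seq_eq_map:
  assumes "odd p"
  shows "zigzag_seq p = map (zigzag p) [0..<p]"
proof -
  have "0 # concat (map (\<lambda>j. [j, p - j]) [1..<m + 1]) = map (zigzag p) [0..<2 * m + 1]" for m
  proof (induction m)
    case 0
    show ?case
      by (simp add: zigzag_def)
  next
    case (Suc m)
    have "zigzag p (2 * m + 1) = m + 1" "zigzag p (2 * m + 2) = p - (m + 1)"
      by (simp_all add: zigzag_def)
    with Suc.IH show ?case
      by simp
  qed
  moreover have "2 * ((p - 1) div 2) + 1 = p"
    using assms by presburger
  ultimately show ?thesis
    unfolding zigzag_seq_def by metis
qed

lemma length_zigzag_seq: "odd p \<Longrightarrow> length (zigzag_seq p) = p"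
  by (simp add: zigzag_seq_eq_map)

lemma zigzag_less: "i < p \<Longrightarrow> zigzag p i < p"
  by (auto simp: zigzag_def)

lemma inj_on_zigzag:
  assumes "odd p"
  shows "inj_on (zigzag p) {0..<p}"
proof (rule inj_on_inverseI)
  \<comment> \<open>odd positions take the values below p/2, positive even positions those above\<close>
  fix i
  assume "i \<in> {0..<p}"
  then show "(\<lambda>v. if v = 0 then 0 else if 2 * v < p then 2 * v - 1 else 2 * (p - v)) (zigzag p i) = i"
    using assms unfolding zigzag_def by (cases "i = 0"; cases "odd i") (auto elim!: oddE)
qed

lemma set_zigzag_seq:
  assumes "odd p"
  shows "set (zigzag_seq p) = {0..<p}"
proof -
  have "zigzag p ` {0..<p} = {0..<p}"
    using inj_on_zigzag[OF assms] zigzag_less by (intro endo_inj_surj) auto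
  then show ?thesis
    by (simp add: zigzag_seq_eq_map[OF assms])
qed

lemma distinct_zigzag_seq: "odd p \<Longrightarrow> distinct (zigzag_seq p)"
  by (simp add: zigzag_seq_eq_map distinct_map inj_on_zigzag)

lemma zigzag_seq_window:
  assumes "odd p" "i + 3 \<le> p"
  shows "take 3 (drop i (zigzag_seq p)) = [zigzag p i, zigzag p (i + 1), zigzag p (i + 2)]"
proof -
  have "take 3 [i..<p] = [i..<i + 3]"
    using assms(2) by (simp add: take_upt)
  also have "\<dots> = [i, i + 1, i + 2]"
    by (simp add: numeral_3_eq_3)
  finally show ?thesis
    using zigzag_seq_eq_map[OF assms(1)] by (simp add: drop_map take_map)
qed

lemma has_ratio_zigzag:
  assumes "odd p" "i + 2 < p"
  shows "has_ratio p (int i + 1) (zigzag p i) (zigzag p (i + 1)) (zigzag p (i + 2))"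
proof (cases "odd i")
  case True
  then obtain j where j: "i = 2 * j + 1"
    by (metis oddE)
  have "zigzag p i = j + 1" "zigzag p (i + 1) = p - (j + 1)" "zigzag p (i + 2) = j + 2"
    using j by (auto simp: zigzag_def)
  then show ?thesis
    using assms j by (simp add: has_ratio_def cong_iff_dvd_diff of_nat_diff algebra_simps)
next
  case False
  show ?thesis
  proof (cases "i = 0")
    case True
    then show ?thesis
      using assms by (simp add: has_ratio_def cong_iff_dvd_diff zigzag_def of_nat_diff)
  next
    case nonzero: False
    define j where "j = i div 2 - 1"
    have j: "i = 2 * j + 2"
      using \<open>\<not> odd i\<close> nonzero unfolding j_def by presburger
    have "zigzag p i = p - (j + 1)" "zigzag p (i + 1) = j + 2" "zigzag p (i + 2) = p - (j + 2)"
      using j by (auto simp: zigzag_def)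
    then show ?thesis
      using assms j by (simp add: has_ratio_def cong_iff_dvd_diff of_nat_diff algebra_simps)
  qed
qed

lemma zigzag_window_ends_distinct:
  assumes "odd p" "i + 2 < p"
  shows "zigzag p i \<noteq> zigzag p (i + 2)"
  using inj_on_zigzag[OF assms(1)] assms(2) by (auto dest: inj_onD)

lemma has_ratio_aff_image_zigzag:
  assumes "odd p" "g \<in> aff_group p" "i + 2 < p"
  shows "has_ratio p (int i + 1) (g (zigzag p i)) (g (zigzag p (i + 1))) (g (zigzag p (i + 2)))"
  using has_ratio_aff_group[OF assms(2) has_ratio_zigzag[OF assms(1,3)]] .

lemma sequencing_zigzag_seq:
  assumes "prime p" "2 < p"
  shows "sequencing (aff_group p) {0..<p} 2 (zigzag_seq p)"
proof -
  have "odd p"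
    using assms by (rule prime_odd_nat)
  have windows_distinct:
    "\<not> same_orbit (aff_group p) (take 3 (drop i (zigzag_seq p))) (take 3 (drop j (zigzag_seq p)))"
    if ij: "i + 3 \<le> p" "j + 3 \<le> p" "i \<noteq> j" for i j
  proof
    assume "same_orbit (aff_group p) (take 3 (drop i (zigzag_seq p))) (take 3 (drop j (zigzag_seq p)))"
    then obtain g where "g \<in> aff_group p"
      and maps: "g (zigzag p i) = zigzag p j" "g (zigzag p (i + 1)) = zigzag p (j + 1)"
        "g (zigzag p (i + 2)) = zigzag p (j + 2)"
      unfolding same_orbit_def
      using zigzag_seq_window[OF \<open>odd p\<close> ij(1)] zigzag_seq_window[OF \<open>odd p\<close> ij(2)]
      by auto
    have ratio_i: "has_ratio p (int i + 1) (zigzag p j) (zigzag p (j + 1)) (zigzag p (j + 2))"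
      using has_ratio_aff_image_zigzag[OF \<open>odd p\<close> \<open>g \<in> aff_group p\<close>, of i] ij
      unfolding maps by simp
    have ratio_j: "has_ratio p (int j + 1) (zigzag p j) (zigzag p (j + 1)) (zigzag p (j + 2))"
      using has_ratio_zigzag[OF \<open>odd p\<close>] ij by simp
    have "i = j"
      using has_ratio_index_eq[OF assms(1) zigzag_less zigzag_less
          zigzag_window_ends_distinct[OF \<open>odd p\<close>] _ _ ratio_i ratio_j] ij
      by simp
    with ij show False
      by simp
  qed
  show ?thesis
    unfolding sequencing_def using windows_distinct
    by (simp add: length_zigzag_seq distinct_zigzag_seq set_zigzag_seq \<open>odd p\<close>)
qed

lemma zigzag_window_onto_triple:
  assumes "prime p" "2 < p" "x < p" "y < p" "z < p" "x \<noteq> y" "y \<noteq> z" "x \<noteq> z"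
  obtains g i where "g \<in> aff_group p" "i + 2 < p"
    "g (zigzag p i) = x" "g (zigzag p (i + 1)) = y" "g (zigzag p (i + 2)) = z"
proof -
  have "odd p"
    using assms(1,2) by (rule prime_odd_nat)
  obtain i where i: "i + 2 < p" "has_ratio p (int i + 1) x y z"
    using has_ratio_exists[OF assms(1,3-8)] by blast
  obtain g where g: "g \<in> aff_group p" "g (zigzag p i) = x" "g (zigzag p (i + 2)) = z"
    using aff_group_maps_pair[OF assms(1) zigzag_less zigzag_less
        zigzag_window_ends_distinct[OF \<open>odd p\<close> i(1)] assms(3,5,8)] i(1)
    by auto
  have "g (zigzag p (i + 1)) < p"
    using aff_group_less[OF _ g(1)] assms(2) by simp
  then have "g (zigzag p (i + 1)) = y"
    using has_ratio_middle_unique[OF has_ratio_aff_image_zigzag[OF \<open>odd p\<close> g(1) i(1)]]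
      i(2) assms(4) unfolding g(2,3) by simp
  with g i(1) show ?thesis
    using that by blast
qed

lemma zigzag_window_image_unique:
  assumes "prime p" "2 < p" "g \<in> aff_group p" "h \<in> aff_group p" "i + 2 < p" "j + 2 < p"
    and g: "g (zigzag p i) = x" "g (zigzag p (i + 1)) = y" "g (zigzag p (i + 2)) = z"
    and h: "h (zigzag p j) = x" "h (zigzag p (j + 1)) = y" "h (zigzag p (j + 2)) = z"
    and "x \<noteq> z"
  shows "h = g \<and> j = i"
proof -
  have "odd p"
    using assms(1,2) by (rule prime_odd_nat)
  have "x < p" "z < p"
    using aff_group_less[OF _ assms(3)] assms(2) g by auto
  moreover have "has_ratio p (int j + 1) x y z"
    using has_ratio_aff_image_zigzag[OF \<open>odd p\<close> assms(4,6)] unfolding h .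
  moreover have "has_ratio p (int i + 1) x y z"
    using has_ratio_aff_image_zigzag[OF \<open>odd p\<close> assms(3,5)] unfolding g .
  ultimately have "j = i"
    using has_ratio_index_eq[OF assms(1) _ _ \<open>x \<noteq> z\<close>] assms(5,6) by simp
  then have "h = g"
    using aff_group_eqI[OF assms(1,4,3) zigzag_less zigzag_less
        zigzag_window_ends_distinct[OF \<open>odd p\<close> assms(5)]] assms(5) g h
    by simp
  with \<open>j = i\<close> show ?thesis
    by simp
qed

lemma zigzag_window_unique:
  assumes "prime p" "2 < p" "distinct u" "length u = 3" "set u \<subseteq> {0..<p}"
  shows "\<exists>!(g, i). g \<in> aff_group p \<and> i + 3 \<le> length (zigzag_seq p)
           \<and> map g (take 3 (drop i (zigzag_seq p))) = u"
proof -
  have "odd p"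
    using assms(1,2) by (rule prime_odd_nat)
  obtain x y z where u: "u = [x, y, z]"
    using assms(4) by (auto simp: numeral_3_eq_3 length_Suc_conv)
  have window_iff: "i + 3 \<le> length (zigzag_seq p) \<and> map g (take 3 (drop i (zigzag_seq p))) = u
      \<longleftrightarrow> i + 2 < p \<and> g (zigzag p i) = x \<and> g (zigzag p (i + 1)) = y \<and> g (zigzag p (i + 2)) = z"
    for g i
    using zigzag_seq_window[OF \<open>odd p\<close>, of i] length_zigzag_seq[OF \<open>odd p\<close>] u by auto
  have "x < p" "y < p" "z < p" "x \<noteq> y" "y \<noteq> z" "x \<noteq> z"
    using assms(3,5) u by auto
  then obtain g i where "g \<in> aff_group p" "i + 2 < p"
    "g (zigzag p i) = x" "g (zigzag p (i + 1)) = y" "g (zigzag p (i + 2)) = z"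
    by (rule zigzag_window_onto_triple[OF assms(1,2)])
  then show ?thesis
    unfolding window_iff using zigzag_window_image_unique[OF assms(1,2)] assms(3) u
    by (intro ex1I[of _ "(g, i)"]) auto
qed

lemma map_aff_group_permutes:
  assumes "prime p" "g \<in> aff_group p" "distinct xs" "set xs = {0..<p}"
  shows "distinct (map g xs) \<and> set (map g xs) = {0..<p}"
  using inj_on_aff_group[OF assms(1,2)] image_aff_group[OF assms(1,2)] assms(3,4)
  by (simp add: distinct_map)

theorem theorem4p2:
  fixes p :: nat
  assumes "prime p" and "p > 2"
  shows "sequencing (aff_group p) {0..<p} 2 (zigzag_seq p)
         \<and> (\<exists>P :: nat list set. perm_design p 3 {0..<p} P)"
proof -
  have "odd p"
    using assms by (rule prime_odd_nat)
  have card: "card (aff_group p) = (\<Prod>i<3 - 1. p - i)"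
    using card_aff_group[of p] assms(2) by (simp add: numeral_2_eq_2)
  have "perm_design p 3 {0..<p} ((\<lambda>g. map g (zigzag_seq p)) ` aff_group p)"
  proof (rule perm_design_image_of_list)
    show "finite (aff_group p)"
      using card assms(2) by (intro card_ge_0_finite) simp
    show "inj_on (\<lambda>g. map g (zigzag_seq p)) (aff_group p)"
      using inj_on_map_aff_group[OF assms(1) set_zigzag_seq[OF \<open>odd p\<close>]] .
  qed (use card map_aff_group_permutes[OF assms(1) _ distinct_zigzag_seq set_zigzag_seq]
         zigzag_window_unique[OF assms] \<open>odd p\<close> in simp_all)
  with sequencing_zigzag_seq[OF assms] show ?thesis
    by blast
qed

end
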